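(* Let $\lambda\in[0,\frac{\pi}{2})$ and let $\mathcal{M}=(M_1,M_2,M_3)$ be a measurement scenario with $M_1=\{A_j\}_j$, $M_2=\{B_k\}_k$, $M_3=\{C_0,\dots,C_{n-1}\}$. For $z\in\{0,1\}$ define $r_{jkl}(z):=\pi^{-1}[(A_j+B_k)-\beta(\lambda,C_l+z\pi)]\bmod 2\in[0,2)$ and the system of $\mathbb{Z}_2$-linear equations $\Psi_l(z):=\{a_j\oplus b_k=r_{jkl}(z) : \text{all } j,k \text{ with } r_{jkl}(z)\in\{0,1\}\}$ in the unknowns $a_j,b_k\in\mathbb{Z}_2$. Then $(|B(\lambda)\rangle,\mathcal{M})$ is a paradox if and only if for every $\vec z=(z_0,\dots,z_{n-1})\in\mathbb{Z}_2^n$ the system $\Psi(\vec z):=\bigcup_l\Psi_l(z_l)$ is inconsistent.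
   Context: $\oplus$ is addition mod 2. For $\varphi\in\mathbb{R}$, $E_\varphi=\cos\varphi X+\sin\varphi Y$ is the equatorial measurement, with $+1$ eigenvector $|\varphi\rangle=\frac{1}{\sqrt2}(|0\rangle+e^{i\varphi}|1\rangle)$ and $-1$ eigenvector $|\varphi+\pi\rangle$; outcomes $+1,-1$ relabelled $0,1$; measurements identified with angles. A measurement scenario $\mathcal{M}=(M_1,M_2,M_3)$ consists of finite sets $M_i\subseteq[0,\pi)$ of angles for qubit $i$; contexts are triples in $M_1\times M_2\times M_3$. For a three-qubit state $|\psi\rangle$, the event $(A,B,C)\to(a,b,c)$ is impossible if $(\langle A+a\pi|\otimes\langle B+b\pi|\otimes\langle C+c\pi|)|\psi\rangle=0$. $(|\psi\rangle,\mathcal{M})$ is a paradox if for every assignment $g$ of outcomes in $\{0,1\}$ to all measurements of $M_1,M_2,M_3$ (as disjoint sets) some context $(A,B,C)$ has $(A,B,C)\to(g(A),g(B),g(C))$ impossible. For $\lambda\in[0,\frac{\pi}{2})$, $|v_\lambda\rangle=\cos\frac{\lambda}{2}|0\rangle+\sin\frac{\lambda}{2}|1\rangle$, $|w_\lambda\rangle=\sin\frac{\lambda}{2}|0\rangle+\cos\frac{\lambda}{2}|1\rangle$, and the interpolant state is $|B(\lambda)\rangle=\frac{1}{\sqrt2}(|00\rangle|v_\lambda\rangle+|11\rangle|w_\lambda\rangle)$. Define modulo $2\pi$: $\beta(\lambda,\varphi)=\varphi-2\arctan\left(\frac{\cos\frac{\lambda}{2}\sin\varphi}{\sin\frac{\lambda}{2}+\cos\frac{\lambda}{2}\cos\varphi}\right)$.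 *)

theory Defs
  imports Complex_Main
begin

text \<open>Outcomes 0,1 are represented by False, True.  Qubit basis states |0>,|1> by False, True.\<close>

definition outcome_val :: "bool \<Rightarrow> real" where
  "outcome_val a = (if a then 1 else 0)"

definition eq_ket :: "real \<Rightarrow> bool \<Rightarrow> complex" where
  "eq_ket \<phi> x = (if x then cis \<phi> else 1) / complex_of_real (sqrt 2)"

type_synonym state3 = "bool \<Rightarrow> bool \<Rightarrow> bool \<Rightarrow> complex"

definition impossible ::
  "state3 \<Rightarrow> real \<times> real \<times> real \<Rightarrow> bool \<times> bool \<times> bool \<Rightarrow> bool" where
  "impossible psi M out \<longleftrightarrow>
     (case M of (A, B, C) \<Rightarrow> case out of (a, b, c) \<Rightarrow>
       (\<Sum>x1\<in>UNIV. \<Sum>x2\<in>UNIV. \<Sum>x3\<in>UNIV.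
          cnj (eq_ket (A + outcome_val a * pi) x1) *
          cnj (eq_ket (B + outcome_val b * pi) x2) *
          cnj (eq_ket (C + outcome_val c * pi) x3) * psi x1 x2 x3) = 0)"

definition measurement_scenario :: "real set \<Rightarrow> real set \<Rightarrow> real set \<Rightarrow> bool" where
  "measurement_scenario M1 M2 M3 \<longleftrightarrow>
     finite M1 \<and> finite M2 \<and> finite M3 \<and>
     M1 \<subseteq> {0..<pi} \<and> M2 \<subseteq> {0..<pi} \<and> M3 \<subseteq> {0..<pi}"

text \<open>Paradox: every outcome assignment (one function per qubit, since the sets of
  measurements are treated as disjoint) makes some context impossible.\<close>
definition paradox :: "state3 \<Rightarrow> real set \<Rightarrow> real set \<Rightarrow> real set \<Rightarrow> bool" where
  "paradox psi M1 M2 M3 \<longleftrightarrow>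
     (\<forall>g1 g2 g3 :: real \<Rightarrow> bool. \<exists>A\<in>M1. \<exists>B\<in>M2. \<exists>C\<in>M3.
        impossible psi (A, B, C) (g1 A, g2 B, g3 C))"

definition v_lam :: "real \<Rightarrow> bool \<Rightarrow> complex" where
  "v_lam lam x = (if x then complex_of_real (sin (lam/2)) else complex_of_real (cos (lam/2)))"

definition w_lam :: "real \<Rightarrow> bool \<Rightarrow> complex" where
  "w_lam lam x = (if x then complex_of_real (cos (lam/2)) else complex_of_real (sin (lam/2)))"

definition B_state :: "real \<Rightarrow> state3" where
  "B_state lam x1 x2 x3 =
     ((if \<not> x1 \<and> \<not> x2 then v_lam lam x3 else 0) +
      (if x1 \<and> x2 then w_lam lam x3 else 0)) / complex_of_real (sqrt 2)"

text \<open>beta(lambda, phi) (mod 2 pi); when the denominator vanishes, the arctan is read as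
  its limiting value +-pi/2, giving phi - pi (mod 2 pi).\<close>
definition beta :: "real \<Rightarrow> real \<Rightarrow> real" where
  "beta lam \<phi> =
     (let d = sin (lam/2) + cos (lam/2) * cos \<phi> in
      if d = 0 then \<phi> - pi
      else \<phi> - 2 * arctan (cos (lam/2) * sin \<phi> / d))"

definition mod2r :: "real \<Rightarrow> real" where
  "mod2r x = x - 2 * of_int \<lfloor>x / 2\<rfloor>"

definition r_coef :: "real \<Rightarrow> real \<Rightarrow> real \<Rightarrow> real \<Rightarrow> bool \<Rightarrow> real" where
  "r_coef lam A B C z = mod2r (((A + B) - beta lam (C + outcome_val z * pi)) / pi)"

definition xor_eq :: "bool \<Rightarrow> bool \<Rightarrow> real \<Rightarrow> bool" where
  "xor_eq a b r \<longleftrightarrow> outcome_val (a \<noteq> b) = r"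

end

theory Submission
  imports Defs "HOL-Library.Real_Mod"
begin

text \<open>Up to the factor 1/4, the amplitude of the event (A,B,C) \<rightarrow> (a,b,c) on B(\<lambda>) is
  cis(-\<gamma>) u + cis(-\<sigma>) cnj u, where \<gamma> = C + c\<pi>, \<sigma> = A + B + (a + b)\<pi> and
  u = sin(\<lambda>/2) + cos(\<lambda>/2) cis \<gamma>.  Since \<beta>(\<lambda>,\<gamma>) = \<gamma> - 2 arg u, we have
  cis \<beta> u = cis \<gamma> cnj u, and u \<noteq> 0 because cos \<lambda> \<noteq> 0.  So the event is impossible iff
  \<sigma> \<equiv> \<beta> + \<pi> (mod 2\<pi>), i.e. iff r(c) = 1 \<oplus> a \<oplus> b: the equation a \<oplus> b = r(c) belongs
  to \<Psi> and is violated.  Hence an outcome assignment avoids every impossible event iff its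
  outcomes on the first two qubits solve \<Psi>(z), where z records its outcomes on the third.\<close>

lemma cis_arctan:
  "cis (arctan t) = (1 + \<i> * complex_of_real t) / complex_of_real (sqrt (1 + t\<^sup>2))"
  by (simp add: complex_eq_iff cos_arctan sin_arctan)

lemma cis_eq_minus_cis_iff: "cis x = - cis y \<longleftrightarrow> [x / pi = y / pi + 1] (rmod 2)"
proof -
  have "- cis y = cis (y + pi)"
    by (simp add: complex_eq_iff)
  then have "cis x = - cis y \<longleftrightarrow> [x = y + pi] (rmod (2 * pi))"
    by (simp add: cis_eq_iff)
  also have "\<dots> \<longleftrightarrow> [x / pi = (y + pi) / pi] (rmod 2)"
    using rcong_divide_modulus[of x "y + pi" 2 pi]
      rcong_mult_modulus[of "x / pi" "(y + pi) / pi" "2 * pi" pi]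
    by (auto simp: mult.commute)
  finally show ?thesis
    by (simp add: add_divide_distrib)
qed

lemma mod2r_eq_iff_rcong:
  assumes "0 \<le> e" "e < 2"
  shows "mod2r x = e \<longleftrightarrow> [x = e] (rmod 2)"
proof -
  have "mod2r x = x rmod 2"
    by (simp add: mod2r_def rmod_def)
  with assms show ?thesis
    by (simp add: rcong_def)
qed

lemma rcong_add_outcomes_iff:
  "[t + (outcome_val a + outcome_val b) = 1] (rmod 2) \<longleftrightarrow> [t = outcome_val (a \<longleftrightarrow> b)] (rmod 2)"
proof -
  have sum: "[outcome_val a + outcome_val b = 1 - outcome_val (a \<longleftrightarrow> b)] (rmod 2)"
    unfolding rcong_altdef by (cases a; cases b) (auto simp: outcome_val_def intro: exI[of _ "-1"])
  show ?thesis
  proof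
    assume "[t + (outcome_val a + outcome_val b) = 1] (rmod 2)"
    from rcong_diff[OF this sum] show "[t = outcome_val (a \<longleftrightarrow> b)] (rmod 2)"
      by simp
  next
    assume "[t = outcome_val (a \<longleftrightarrow> b)] (rmod 2)"
    from rcong_add[OF this sum] show "[t + (outcome_val a + outcome_val b) = 1] (rmod 2)"
      by simp
  qed
qed

(* The arctan in beta is an argument of this number:
   beta lam \<phi> = \<phi> - 2 arg (beta_factor lam \<phi>) modulo 2\<pi>. *)
definition beta_factor :: "real \<Rightarrow> real \<Rightarrow> complex" where
  "beta_factor lam \<phi> = complex_of_real (sin (lam/2)) + complex_of_real (cos (lam/2)) * cis \<phi>"

lemma cis_beta_mult_beta_factor:
  "cis (beta lam \<phi>) * beta_factor lam \<phi> = cis \<phi> * cnj (beta_factor lam \<phi>)"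
proof (cases "sin (lam/2) + cos (lam/2) * cos \<phi> = 0")
  case True
  then show ?thesis
    by (simp add: beta_def beta_factor_def complex_eq_iff)
next
  case False
  define d where "d = sin (lam/2) + cos (lam/2) * cos \<phi>"
  define t where "t = cos (lam/2) * sin \<phi> / d"
  define w where "w = 1 + \<i> * complex_of_real t"
  have "beta_factor lam \<phi> = d * w"
    using False by (simp add: beta_factor_def complex_eq_iff d_def t_def w_def)
  moreover have "cis (beta lam \<phi>) = cis \<phi> * (cnj w / w)"
  proof -
    have "cis (beta lam \<phi>) = cis \<phi> / cis (arctan t) ^ 2"
      using False by (simp add: beta_def Let_def d_def t_def DeMoivre cis_divide)
    also have "\<dots> = cis \<phi> * complex_of_real (1 + t\<^sup>2) / w ^ 2"
      by (simp add: cis_arctan w_def power_divide flip: of_real_power)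
    also have "complex_of_real (1 + t\<^sup>2) = cnj w * w"
      by (simp add: w_def complex_eq_iff power2_eq_square)
    finally show ?thesis
      by (simp add: power2_eq_square)
  qed
  moreover have "w \<noteq> 0"
    by (simp add: w_def complex_eq_iff)
  ultimately show ?thesis
    by simp
qed

lemma beta_factor_nonzero:
  assumes "cos lam \<noteq> 0"
  shows "beta_factor lam \<phi> \<noteq> 0"
proof
  have sq_norm: "(Re (beta_factor lam \<phi>))\<^sup>2 + (Im (beta_factor lam \<phi>))\<^sup>2 = 1 + sin lam * cos \<phi>"
  proof -
    have "Re (beta_factor lam \<phi>) = sin (lam/2) + cos (lam/2) * cos \<phi>"
      and "Im (beta_factor lam \<phi>) = cos (lam/2) * sin \<phi>"
      and "sin lam = 2 * sin (lam/2) * cos (lam/2)"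
      using sin_double[of "lam/2"] by (simp_all add: beta_factor_def)
    with sin_cos_squared_add[of "lam/2"] sin_cos_squared_add[of \<phi>] show ?thesis
      by algebra
  qed
  assume "beta_factor lam \<phi> = 0"
  with sq_norm have "sin lam * cos \<phi> = -1"
    by simp
  moreover have "\<bar>sin lam\<bar> < 1"
  proof -
    have "(sin lam)\<^sup>2 < 1"
      using assms sin_squared_eq[of lam] by simp
    then show ?thesis
      by (simp add: abs_square_less_1)
  qed
  moreover have "\<bar>sin lam * cos \<phi>\<bar> \<le> \<bar>sin lam\<bar>"
    unfolding abs_mult by (intro mult_right_le_one_le abs_ge_zero abs_cos_le_one)
  ultimately show False
    by simp
qed

lemma B_state_amplitude:
  "(\<Sum>x1\<in>UNIV. \<Sum>x2\<in>UNIV. \<Sum>x3\<in>UNIV.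
      cnj (eq_ket \<phi>1 x1) * cnj (eq_ket \<phi>2 x2) * cnj (eq_ket \<phi>3 x3) * B_state lam x1 x2 x3) =
    (cis (- \<phi>3) * beta_factor lam \<phi>3 + cis (- (\<phi>1 + \<phi>2)) * cnj (beta_factor lam \<phi>3)) / 4"
  (is "_ = ?rhs")
proof -
  define k where "k = complex_of_real (sqrt 2)"
  have k4: "k * k * (k * k) = 4"
    by (simp add: k_def flip: of_real_mult)
  have eq_ket: "cnj (eq_ket \<phi> x) = (if x then cis (- \<phi>) else 1) / k" for \<phi> x
    by (simp add: eq_ket_def cis_cnj k_def)
  have B_state: "B_state lam x1 x2 x3 =
      ((if \<not> x1 \<and> \<not> x2 then v_lam lam x3 else 0) + (if x1 \<and> x2 then w_lam lam x3 else 0)) / k"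
    for x1 x2 x3
    by (simp add: B_state_def k_def)
  have "k \<noteq> 0"
    by (simp add: k_def)
  then have "(\<Sum>x1\<in>UNIV. \<Sum>x2\<in>UNIV. \<Sum>x3\<in>UNIV.
      cnj (eq_ket \<phi>1 x1) * cnj (eq_ket \<phi>2 x2) * cnj (eq_ket \<phi>3 x3) * B_state lam x1 x2 x3) =
    (cos (lam/2) + cis (- \<phi>3) * sin (lam/2) +
      cis (- \<phi>1) * cis (- \<phi>2) * (sin (lam/2) + cis (- \<phi>3) * cos (lam/2))) / (k * k * (k * k))"
    unfolding eq_ket B_state by (simp add: UNIV_bool v_lam_def w_lam_def field_simps)
  also have "\<dots> = ?rhs"
  proof -
    have "cis (- (\<phi>1 + \<phi>2)) = cis (- \<phi>1) * cis (- \<phi>2)" and "cis (- \<phi>3) * cis \<phi>3 = 1"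
      by (simp_all add: cis_mult)
    then show ?thesis
      unfolding k4 by (simp add: beta_factor_def cis_cnj algebra_simps)
  qed
  finally show ?thesis .
qed

lemma impossible_B_state_iff_cis:
  assumes "cos lam \<noteq> 0"
  shows "impossible (B_state lam) (A, B, C) (a, b, c) \<longleftrightarrow>
    cis (A + B + (outcome_val a + outcome_val b) * pi) = - cis (beta lam (C + outcome_val c * pi))"
proof -
  define \<gamma> where "\<gamma> = C + outcome_val c * pi"
  define \<sigma> where "\<sigma> = A + B + (outcome_val a + outcome_val b) * pi"
  define u where "u = beta_factor lam \<gamma>"
  have "impossible (B_state lam) (A, B, C) (a, b, c) \<longleftrightarrow> cis (- \<gamma>) * u + cis (- \<sigma>) * cnj u = 0"
    unfolding impossible_def B_state_amplitude by (simp add: u_def \<gamma>_def \<sigma>_def algebra_simps)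
  also have "\<dots> \<longleftrightarrow> cis \<sigma> * u + cis \<gamma> * cnj u = 0"
  proof -
    have "cis (\<sigma> + \<gamma>) * (cis (- \<gamma>) * u + cis (- \<sigma>) * cnj u) = cis \<sigma> * u + cis \<gamma> * cnj u"
      by (simp add: algebra_simps cis_mult)
    then show ?thesis
      by (metis cis_neq_zero mult_eq_0_iff)
  qed
  also have "\<dots> \<longleftrightarrow> (cis \<sigma> + cis (beta lam \<gamma>)) * u = 0"
    using cis_beta_mult_beta_factor[of lam \<gamma>] by (simp add: u_def distrib_right)
  also have "\<dots> \<longleftrightarrow> cis \<sigma> = - cis (beta lam \<gamma>)"
    using beta_factor_nonzero[OF assms] by (simp add: u_def eq_neg_iff_add_eq_0)
  finally show ?thesis
    by (simp add: \<sigma>_def \<gamma>_def)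
qed

lemma impossible_B_state_iff:
  assumes "cos lam \<noteq> 0"
  shows "impossible (B_state lam) (A, B, C) (a, b, c) \<longleftrightarrow>
    r_coef lam A B C c = outcome_val (a \<longleftrightarrow> b)"
proof -
  define \<beta> where "\<beta> = beta lam (C + outcome_val c * pi)"
  define t where "t = (A + B - \<beta>) / pi"
  have "impossible (B_state lam) (A, B, C) (a, b, c) \<longleftrightarrow>
      cis (A + B + (outcome_val a + outcome_val b) * pi) = - cis \<beta>"
    unfolding impossible_B_state_iff_cis[OF assms] \<beta>_def ..
  also have "\<dots> \<longleftrightarrow> [(A + B + (outcome_val a + outcome_val b) * pi) / pi = \<beta> / pi + 1] (rmod 2)"
    by (rule cis_eq_minus_cis_iff)
  also have "(A + B + (outcome_val a + outcome_val b) * pi) / pi =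
      t + (outcome_val a + outcome_val b) + \<beta> / pi"
    by (simp add: t_def field_simps)
  also have "[t + (outcome_val a + outcome_val b) + \<beta> / pi = \<beta> / pi + 1] (rmod 2) \<longleftrightarrow>
      [t + (outcome_val a + outcome_val b) = 1] (rmod 2)"
    by (simp add: add.commute[of "\<beta> / pi"])
  also have "\<dots> \<longleftrightarrow> [t = outcome_val (a \<longleftrightarrow> b)] (rmod 2)"
    by (rule rcong_add_outcomes_iff)
  also have "\<dots> \<longleftrightarrow> mod2r t = outcome_val (a \<longleftrightarrow> b)"
    by (rule mod2r_eq_iff_rcong[symmetric]) (simp_all add: outcome_val_def)
  finally show ?thesis
    by (simp add: r_coef_def t_def \<beta>_def)
qed

lemma violated_xor_eq_iff: "(r \<in> {0, 1} \<and> \<not> xor_eq a b r) \<longleftrightarrow> r = outcome_val (a \<longleftrightarrow> b)"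
  by (auto simp: xor_eq_def outcome_val_def)

lemma paradox_B_state_iff:
  assumes "cos lam \<noteq> 0" and "inj_on C L"
  shows "paradox (B_state lam) M1 M2 (C ` L) \<longleftrightarrow>
    (\<forall>z a b. \<exists>A\<in>M1. \<exists>B\<in>M2. \<exists>l\<in>L.
      r_coef lam A B (C l) (z l) = outcome_val (a A \<longleftrightarrow> b B))"
proof -
  have "paradox (B_state lam) M1 M2 (C ` L) \<longleftrightarrow>
      (\<forall>a b g. \<exists>A\<in>M1. \<exists>B\<in>M2. \<exists>l\<in>L.
        r_coef lam A B (C l) (g (C l)) = outcome_val (a A \<longleftrightarrow> b B))"
    unfolding paradox_def impossible_B_state_iff[OF assms(1)] by simp
  also have "\<dots> \<longleftrightarrow>
      (\<forall>z a b. \<exists>A\<in>M1. \<exists>B\<in>M2. \<exists>l\<in>L.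
        r_coef lam A B (C l) (z l) = outcome_val (a A \<longleftrightarrow> b B))"
  proof (intro iffI allI)
    fix z a b
    assume "\<forall>a b g. \<exists>A\<in>M1. \<exists>B\<in>M2. \<exists>l\<in>L.
      r_coef lam A B (C l) (g (C l)) = outcome_val (a A \<longleftrightarrow> b B)"
    then have "\<exists>A\<in>M1. \<exists>B\<in>M2. \<exists>l\<in>L.
      r_coef lam A B (C l) ((z \<circ> inv_into L C) (C l)) = outcome_val (a A \<longleftrightarrow> b B)"
      by blast
    with assms(2) show "\<exists>A\<in>M1. \<exists>B\<in>M2. \<exists>l\<in>L.
      r_coef lam A B (C l) (z l) = outcome_val (a A \<longleftrightarrow> b B)"
      by (auto simp: inv_into_f_f)
  next
    fix a b g
    assume "\<forall>z a b. \<exists>A\<in>M1. \<exists>B\<in>M2. \<exists>l\<in>L.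
      r_coef lam A B (C l) (z l) = outcome_val (a A \<longleftrightarrow> b B)"
    then have "\<exists>A\<in>M1. \<exists>B\<in>M2. \<exists>l\<in>L.
      r_coef lam A B (C l) ((g \<circ> C) l) = outcome_val (a A \<longleftrightarrow> b B)"
      by blast
    then show "\<exists>A\<in>M1. \<exists>B\<in>M2. \<exists>l\<in>L.
      r_coef lam A B (C l) (g (C l)) = outcome_val (a A \<longleftrightarrow> b B)"
      by simp
  qed
  finally show ?thesis .
qed

theorem lemma9:
  fixes lam :: real and M1 M2 :: "real set" and C :: "nat \<Rightarrow> real" and n :: nat
  assumes "0 \<le> lam" and "lam < pi / 2"
    and "measurement_scenario M1 M2 (C ` {..<n})"
    and "inj_on C {..<n}"
  shows "paradox (B_state lam) M1 M2 (C ` {..<n}) \<longleftrightarrow>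
    (\<forall>z :: nat \<Rightarrow> bool.
       \<not> (\<exists>a b :: real \<Rightarrow> bool.
            \<forall>l<n. \<forall>A\<in>M1. \<forall>B\<in>M2.
              r_coef lam A B (C l) (z l) \<in> {0, 1} \<longrightarrow>
              xor_eq (a A) (b B) (r_coef lam A B (C l) (z l))))"
proof -
  have "cos lam \<noteq> 0"
    using assms(1,2) cos_gt_zero_pi[of lam] by simp
  show ?thesis
    unfolding paradox_B_state_iff[OF \<open>cos lam \<noteq> 0\<close> assms(4)] violated_xor_eq_iff[symmetric]
      Bex_def lessThan_iff
    by blast
qed

end
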